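(* Let $n\ge0$ and run the Tiden–Arnborg algorithm on $\sigma(n)$, performing sum transformations level by level. For every level $k<n+3$, a path of lateral edges from $x_{1^{k-1}}$ to $y_{2^{k-1}}$ is created.
   Context: Variables are $T$, $x_s$, $y_s$ with $s$ a string over $\{1,2\}$ ($x=x_\varepsilon$, $y=y_\varepsilon$); the level of $x_s$ or $y_s$ is $|s|+1$. For $n\ge0$, $\sigma(n)$ consists of, for all $0\le i\le n$: $x_{1^i}=^?x_{1^{i+1}}+x_{1^i2}$, $y_{2^i}=^?y_{2^i1}+y_{2^{i+1}}$, $y_{2^i1}=^?T\times x_{1^i2}$, $x=^?T\times y$, $x_{1^{i+1}}=^?x_{1^{i+2}}+x_{1^{i+1}2}$; its variables occupy levels $1,\dots,n+3$. A lateral edge from $u$ to $v$ means the equation $u=^?T\times v$ is present. A variable $U_i$ ($U\in\{x,y\}$) is a peak if the system contains both $U_i=^?U_{i1}+U_{i2}$ and $U_i=^?T\times W_j$. A sum transformation at a peak $U_i$ replaces $U_i=^?U_{i1}+U_{i2}$ by $W_j=^?W_{j1}+W_{j2}$, $U_{i1}=^?T\times W_{j1}$, $U_{i2}=^?T\times W_{j2}$ (keeping $U_i=^?T\times W_j$), with $W_{j1},W_{j2}$ identified with the existing children of $W_j$ if $W_j$ already has a sum equation. The Tiden–Arnborg algorithm (for $x\times(y+z)=x\times y+x\times z$) applies sum transformations as long as possible, completing all those at one level before the next. *)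

theory Defs
  imports Main
begin

(* Digits of the index strings over {1,2} *)
datatype dig = D1 | D2

(* Variables: T, x_s, y_s with s a string over {1,2} *)
datatype var = Tv | Xv "dig list" | Yv "dig list"

(* Equations:  SumEq a b c  is  a =? b + c ;  LatEq u v  is  u =? T \<times> v *)
datatype eqn = SumEq var var var | LatEq var var

type_synonym system = "eqn set"

fun level :: "var \<Rightarrow> nat" where
  "level Tv = 0"
| "level (Xv s) = length s + 1"
| "level (Yv s) = length s + 1"

fun ch :: "var \<Rightarrow> dig \<Rightarrow> var" where
  "ch Tv d = Tv"
| "ch (Xv s) d = Xv (s @ [d])"
| "ch (Yv s) d = Yv (s @ [d])"

definition ones :: "nat \<Rightarrow> dig list" where "ones i = replicate i D1"
definition twos :: "nat \<Rightarrow> dig list" where "twos i = replicate i D2"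

definition sigma :: "nat \<Rightarrow> system" where
  "sigma n =
     {SumEq (Xv (ones i)) (Xv (ones (Suc i))) (Xv (ones i @ [D2])) | i. i \<le> n}
   \<union> {SumEq (Yv (twos i)) (Yv (twos i @ [D1])) (Yv (twos (Suc i))) | i. i \<le> n}
   \<union> {LatEq (Yv (twos i @ [D1])) (Xv (ones i @ [D2])) | i. i \<le> n}
   \<union> {LatEq (Xv []) (Yv [])}
   \<union> {SumEq (Xv (ones (Suc i))) (Xv (ones (Suc (Suc i)))) (Xv (ones (Suc i) @ [D2])) | i. i \<le> n}"

definition sum_eq :: "var \<Rightarrow> eqn" where
  "sum_eq u = SumEq u (ch u D1) (ch u D2)"

definition lat :: "system \<Rightarrow> (var \<times> var) set" where
  "lat S = {(u, v). LatEq u v \<in> S}"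

definition is_peak :: "system \<Rightarrow> var \<Rightarrow> bool" where
  "is_peak S u \<longleftrightarrow> sum_eq u \<in> S \<and> (\<exists>w. LatEq u w \<in> S)"

definition sum_transform :: "system \<Rightarrow> var \<Rightarrow> var \<Rightarrow> system" where
  "sum_transform S u w =
     (S - {sum_eq u}) \<union> {sum_eq w, LatEq (ch u D1) (ch w D1), LatEq (ch u D2) (ch w D2)}"

definition ta_step :: "system \<Rightarrow> system \<Rightarrow> bool" where
  "ta_step S S' \<longleftrightarrow> (\<exists>u w. sum_eq u \<in> S \<and> LatEq u w \<in> S \<and>
       (\<forall>v. is_peak S v \<longrightarrow> level u \<le> level v) \<and> S' = sum_transform S u w)"

(* a run of the algorithm on sigma(n): transformations are applied as long as possible;
   once none is applicable the system stays unchanged *)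
definition ta_run :: "nat \<Rightarrow> (nat \<Rightarrow> system) \<Rightarrow> bool" where
  "ta_run n f \<longleftrightarrow> f 0 = sigma n \<and>
     (\<forall>i. ta_step (f i) (f (Suc i)) \<or> ((\<nexists>S'. ta_step (f i) S') \<and> f (Suc i) = f i))"

end

theory Submission
  imports Defs
begin

text \<open>Every lateral edge ever present joins \<open>x\<^sub>s\<close> to \<open>y\<^sub>s\<close> or \<open>y\<^sub>s\<close> to \<open>x\<^sub>t\<close>, where \<open>t\<close> is the
binary successor of \<open>s\<close> (digits read least significant first, \<open>1 = 0\<close>, \<open>2 = 1\<close>), and lies
at level at most \<open>n + 3\<close>. So each variable has at most one lateral successor and edges strictly
increase a rank; the number of missing admissible edges, and then the total rank of the
variables still carrying a sum equation, decrease with each transformation, and the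
algorithm halts. In the final system there is no peak, and an invariant guarantees that an
edge leaving a variable whose sum equation has been consumed has been copied to both
children. A lateral path from \<open>x\<^bsub>1^j\<^esub>\<close> to \<open>y\<^bsub>2^j\<^esub>\<close> therefore lifts to paths
\<open>x\<^bsub>1^j1\<^esub> \<rightarrow> y\<^bsub>2^j1\<^esub>\<close> and \<open>x\<^bsub>1^j2\<^esub> \<rightarrow> y\<^bsub>2^j2\<^esub>\<close>, which the edge
\<open>y\<^bsub>2^j1\<^esub> \<rightarrow> x\<^bsub>1^j2\<^esub>\<close> of \<open>\<sigma>(n)\<close> joins into one from \<open>x\<^bsub>1^(j+1)\<^esub>\<close> to \<open>y\<^bsub>2^(j+1)\<^esub>\<close>.\<close>

section \<open>Binary successor of index strings\<close>

fun incr :: "dig list \<Rightarrow> dig list option" where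
  "incr [] = None"
| "incr (D1 # r) = Some (D2 # r)"
| "incr (D2 # r) = map_option (Cons D1) (incr r)"

fun bin_val :: "dig list \<Rightarrow> nat" where
  "bin_val [] = 0"
| "bin_val (D1 # r) = 2 * bin_val r"
| "bin_val (D2 # r) = 2 * bin_val r + 1"

lemma incr_append: "incr s = Some t \<Longrightarrow> incr (s @ [d]) = Some (t @ [d])"
  by (induction s arbitrary: t rule: incr.induct) auto

lemma length_incr: "incr s = Some t \<Longrightarrow> length t = length s"
  by (induction s arbitrary: t rule: incr.induct) auto

lemma bin_val_incr: "incr s = Some t \<Longrightarrow> bin_val t = Suc (bin_val s)"
  by (induction s arbitrary: t rule: incr.induct) auto

lemma bin_val_less: "bin_val s < 2 ^ length s"
  by (induction s rule: bin_val.induct) auto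

lemma ones_Suc: "ones (Suc i) = ones i @ [D1]"
  by (simp add: ones_def replicate_append_same)

lemma twos_Suc: "twos (Suc i) = twos i @ [D2]"
  by (simp add: twos_def replicate_append_same)

lemma incr_twos_D1: "incr (twos i @ [D1]) = Some (ones i @ [D2])"
  by (induction i) (auto simp: twos_def ones_def)

lemma ch_eq_ch_iff: "a \<noteq> Tv \<Longrightarrow> b \<noteq> Tv \<Longrightarrow> ch a d = ch b e \<longleftrightarrow> a = b \<and> d = e"
  by (cases a; cases b) auto

lemma ch_neq_Tv: "a \<noteq> Tv \<Longrightarrow> ch a d \<noteq> Tv"
  by (cases a) auto

lemma level_ch: "a \<noteq> Tv \<Longrightarrow> level (ch a d) = Suc (level a)"
  by (cases a) auto

lemma finite_level_le: "finite {v. level v \<le> m}"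
proof -
  have "(UNIV :: dig set) = {D1, D2}" using dig.exhaust by auto
  then have "finite (UNIV :: dig set)" by (metis finite.emptyI finite_insert)
  then have fin: "finite {s :: dig list. length s \<le> m}"
    using finite_lists_length_le[of UNIV m] by simp
  have "{v. level v \<le> m} \<subseteq> insert Tv (Xv ` {s. length s \<le> m} \<union> Yv ` {s. length s \<le> m})"
  proof
    fix v assume "v \<in> {v. level v \<le> m}"
    then show "v \<in> insert Tv (Xv ` {s. length s \<le> m} \<union> Yv ` {s. length s \<le> m})"
      by (cases v) auto
  qed
  then show ?thesis using fin finite_subset by blast
qed

text \<open>Admissible edges walk up the order \<open>x\<^sub>s < y\<^sub>s < x\<^sub>t < y\<^sub>t < \<dots>\<close>
(\<open>t\<close> the successor of \<open>s\<close>); \<open>rank\<close> is the position in it.\<close>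

fun rank :: "var \<Rightarrow> nat" where
  "rank Tv = 0"
| "rank (Xv s) = 2 * bin_val s"
| "rank (Yv s) = 2 * bin_val s + 1"

lemma rank_less: "rank v < 2 ^ level v"
proof (cases v)
  case (Xv s) then show ?thesis using bin_val_less[of s] by simp
next
  case (Yv s) then show ?thesis using bin_val_less[of s] by simp
qed simp

definition adm_edge :: "var \<Rightarrow> var \<Rightarrow> bool" where
  "adm_edge a b \<longleftrightarrow>
     (\<exists>s. a = Xv s \<and> b = Yv s) \<or> (\<exists>s t. a = Yv s \<and> b = Xv t \<and> incr s = Some t)"

lemma adm_edge_ch: "adm_edge a b \<Longrightarrow> adm_edge (ch a d) (ch b d)"
  unfolding adm_edge_def using incr_append by auto

lemma adm_edge_unique: "adm_edge a b \<Longrightarrow> adm_edge a c \<Longrightarrow> b = c"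
  unfolding adm_edge_def by auto

lemma adm_edge_rank: "adm_edge a b \<Longrightarrow> rank a < rank b"
  unfolding adm_edge_def using bin_val_incr by auto

lemma adm_edge_level: "adm_edge a b \<Longrightarrow> level b = level a \<and> a \<noteq> Tv \<and> b \<noteq> Tv"
  unfolding adm_edge_def using length_incr by auto

definition adm_edges :: "nat \<Rightarrow> (var \<times> var) set" where
  "adm_edges n = {(a, b). adm_edge a b \<and> level a \<le> n + 3}"

lemma finite_adm_edges: "finite (adm_edges n)"
proof -
  have "adm_edges n \<subseteq> {v. level v \<le> n + 3} \<times> {v. level v \<le> n + 3}"
    unfolding adm_edges_def using adm_edge_level by fastforce
  then show ?thesis using finite_level_le finite_subset by blast
qed

lemma lat_sum_transform:
  "lat (sum_transform S u w) = lat S \<union> {(ch u D1, ch w D1), (ch u D2, ch w D2)}"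
  unfolding lat_def sum_transform_def sum_eq_def by auto

lemma sum_eq_eq_iff: "sum_eq a = sum_eq b \<longleftrightarrow> a = b"
  unfolding sum_eq_def by auto

lemma sum_eq_sum_transform_iff:
  "sum_eq v \<in> sum_transform S u w \<longleftrightarrow> sum_eq v \<in> S \<and> v \<noteq> u \<or> v = w"
  unfolding sum_transform_def by (auto simp: sum_eq_eq_iff) (auto simp: sum_eq_def)

lemma ta_stepE:
  assumes "ta_step S S'"
  obtains u w where "sum_eq u \<in> S" "(u, w) \<in> lat S" "S' = sum_transform S u w"
  using assms unfolding ta_step_def lat_def by blast

lemma ta_step_exists:
  assumes "sum_eq v \<in> S" and "(v, w) \<in> lat S"
  shows "\<exists>S'. ta_step S S'"
proof -
  have "is_peak S v" using assms unfolding is_peak_def lat_def by auto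
  then obtain u where "is_peak S u" and least: "\<forall>y. is_peak S y \<longrightarrow> level u \<le> level y"
    using ex_has_least_nat[of "is_peak S" v level] by blast
  then obtain w' where "sum_eq u \<in> S" "LatEq u w' \<in> S" unfolding is_peak_def by blast
  then have "ta_step S (sum_transform S u w')" unfolding ta_step_def using least by blast
  then show ?thesis ..
qed

section \<open>The invariant\<close>

definition covered :: "system \<Rightarrow> var \<Rightarrow> bool" where
  "covered S v \<longleftrightarrow> sum_eq v \<in> S \<or>
     (\<exists>w. (v, w) \<in> lat S \<and> (ch v D1, ch w D1) \<in> lat S \<and> (ch v D2, ch w D2) \<in> lat S)"

definition ta_invariant :: "nat \<Rightarrow> system \<Rightarrow> bool" where
  "ta_invariant n S \<longleftrightarrow>
     lat S \<subseteq> adm_edges n \<and>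
     (\<forall>v. sum_eq v \<in> S \<longrightarrow> v \<noteq> Tv \<and> level v \<le> n + 2) \<and>
     (\<forall>v w e. (ch v e, ch w e) \<in> lat S \<longrightarrow> (v, w) \<in> lat S) \<and>
     (\<forall>v w. (v, w) \<in> lat S \<longrightarrow> sum_eq v \<notin> S \<longrightarrow> covered S v \<longrightarrow> covered S w) \<and>
     (\<forall>i \<le> n + 1. covered S (Xv (ones i))) \<and>
     lat (sigma n) \<subseteq> lat S"

lemma lat_sigma:
  "lat (sigma n) = insert (Xv [], Yv []) {(Yv (twos i @ [D1]), Xv (ones i @ [D2])) | i. i \<le> n}"
  unfolding lat_def sigma_def by auto

lemma sum_eq_sigmaD:
  "sum_eq v \<in> sigma n \<Longrightarrow> (\<exists>i \<le> n + 1. v = Xv (ones i)) \<or> (\<exists>i \<le> n. v = Yv (twos i))"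
  unfolding sigma_def sum_eq_def
  apply (elim UnE)
  subgoal by clarsimp (metis le_SucI)
  subgoal by auto
  subgoal by auto
  subgoal by auto
  subgoal by clarsimp (metis Suc_le_mono)
  done

lemma sum_eq_sigma_Xv: "i \<le> n + 1 \<Longrightarrow> sum_eq (Xv (ones i)) \<in> sigma n"
  by (cases i) (auto simp: sigma_def sum_eq_def ones_Suc[symmetric])

lemma ch_edge_notin_lat_sigma: "(ch v e, ch w e) \<notin> lat (sigma n)"
  unfolding lat_sigma by (cases v; cases w) auto

lemma ta_invariant_sigma: "ta_invariant n (sigma n)"
  unfolding ta_invariant_def
proof (intro conjI allI impI subsetI)
  fix p assume "p \<in> lat (sigma n)"
  then show "p \<in> adm_edges n"
    unfolding lat_sigma adm_edges_def adm_edge_def using incr_twos_D1 by (auto simp: twos_def)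
next
  fix v assume "sum_eq v \<in> sigma n"
  then show "v \<noteq> Tv" "level v \<le> n + 2"
    using sum_eq_sigmaD[of v n] by (auto simp: ones_def twos_def)
next
  fix v w e assume "(ch v e, ch w e) \<in> lat (sigma n)"
  then show "(v, w) \<in> lat (sigma n)" using ch_edge_notin_lat_sigma by blast
next
  fix v w assume "(v, w) \<in> lat (sigma n)" "sum_eq v \<notin> sigma n" "covered (sigma n) v"
  \<comment> \<open>impossible: \<open>\<sigma>(n)\<close> has no edges between children\<close>
  then show "covered (sigma n) w" using ch_edge_notin_lat_sigma unfolding covered_def by blast
next
  fix i assume "i \<le> n + 1"
  then show "covered (sigma n) (Xv (ones i))" by (simp add: covered_def sum_eq_sigma_Xv)
qed

lemma covered_sum_transform:
  assumes "sum_eq u \<in> S" and "(u, w) \<in> lat S" and "covered S v"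
  shows "covered (sum_transform S u w) v"
proof (cases "sum_eq v \<in> S \<and> v \<noteq> u")
  case True
  then show ?thesis unfolding covered_def sum_eq_sum_transform_iff by blast
next
  case False
  then have "v = u \<or> sum_eq v \<notin> S" by blast
  then show ?thesis
    using assms unfolding covered_def lat_sum_transform by blast
qed

lemma ta_invariant_sum_transform:
  assumes inv: "ta_invariant n S" and su: "sum_eq u \<in> S" and uw: "(u, w) \<in> lat S"
  shows "ta_invariant n (sum_transform S u w)"
proof -
  let ?S = "sum_transform S u w"
  note lat' = lat_sum_transform[of S u w]
  from inv have adm: "lat S \<subseteq> adm_edges n"
    and sums: "\<And>v. sum_eq v \<in> S \<Longrightarrow> v \<noteq> Tv \<and> level v \<le> n + 2"
    and parent: "\<And>v w e. (ch v e, ch w e) \<in> lat S \<Longrightarrow> (v, w) \<in> lat S"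
    and propagate: "\<And>v w. (v, w) \<in> lat S \<Longrightarrow> sum_eq v \<notin> S \<Longrightarrow> covered S v \<Longrightarrow> covered S w"
    and ones_covered: "\<And>i. i \<le> n + 1 \<Longrightarrow> covered S (Xv (ones i))"
    and init: "lat (sigma n) \<subseteq> lat S"
    unfolding ta_invariant_def by blast+
  have adm_uw: "adm_edge u w" using adm uw unfolding adm_edges_def by blast
  have u: "u \<noteq> Tv" "level u \<le> n + 2" using sums su by auto
  have w: "w \<noteq> Tv" "level w = level u" using adm_edge_level[OF adm_uw] by auto
  have adm': "lat ?S \<subseteq> adm_edges n"
    using adm adm_edge_ch[OF adm_uw] level_ch[OF u(1)] u(2) unfolding lat' adm_edges_def by auto
  have unique': "b = c" if "(a, b) \<in> lat ?S" "(a, c) \<in> lat ?S" for a b c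
    using that adm' adm_edge_unique unfolding adm_edges_def by blast
  have new_edge: "v = u \<and> v' = w" if "ch v e = ch u d" "ch v' e = ch w d" for v v' e d
    using that ch_eq_ch_iff u(1) w(1) ch_neq_Tv by (metis ch.simps(1))
  have parent': "(v, v') \<in> lat ?S" if "(ch v e, ch v' e) \<in> lat ?S" for v v' e
    using that parent new_edge uw unfolding lat' by blast
  have propagate': "covered ?S v'"
    if vv': "(v, v') \<in> lat ?S" and ns: "sum_eq v \<notin> ?S" and cv: "covered ?S v" for v v'
  proof (cases "v = u")
    case True
    then have "v' = w" using unique' vv' uw lat' by blast
    then show ?thesis unfolding covered_def sum_eq_sum_transform_iff by blast
  next
    case False
    \<comment> \<open>the new edges leave children of \<open>u \<noteq> v\<close>, so \<open>v\<close> was already covered in \<open>S\<close>\<close>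
    obtain v'' where e: "(v, v'') \<in> lat ?S" and
        e1: "(ch v D1, ch v'' D1) \<in> lat ?S" and e2: "(ch v D2, ch v'' D2) \<in> lat ?S"
      using cv ns unfolding covered_def by blast
    have e1S: "(ch v D1, ch v'' D1) \<in> lat S" and e2S: "(ch v D2, ch v'' D2) \<in> lat S"
      using e1 e2 new_edge False unfolding lat' by blast+
    have "v' = v''" using unique' vv' e by blast
    moreover have "(v, v'') \<in> lat S" using parent e1S by blast
    moreover have "sum_eq v \<notin> S" using ns False sum_eq_sum_transform_iff by blast
    ultimately have "covered S v'" using propagate e1S e2S unfolding covered_def by blast
    then show ?thesis using covered_sum_transform su uw by blast
  qed
  have sums': "v \<noteq> Tv \<and> level v \<le> n + 2" if "sum_eq v \<in> ?S" for v
    using that sums u w unfolding sum_eq_sum_transform_iff by auto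
  show ?thesis
    unfolding ta_invariant_def
    using adm' sums' parent' propagate' ones_covered covered_sum_transform[OF su uw] init lat'
    by blast
qed

section \<open>Termination\<close>

definition missing_edges :: "nat \<Rightarrow> system \<Rightarrow> nat" where
  "missing_edges n S = card (adm_edges n - lat S)"

definition sum_weight :: "nat \<Rightarrow> system \<Rightarrow> nat" where
  "sum_weight n S = (\<Sum>v | sum_eq v \<in> S. 2 ^ (n + 3) - rank v)"

lemma sum_weight_sum_transform_less:
  assumes inv: "ta_invariant n S" and su: "sum_eq u \<in> S" and uw: "(u, w) \<in> lat S"
  shows "sum_weight n (sum_transform S u w) < sum_weight n S"
proof -
  let ?V = "{v. sum_eq v \<in> S}" and ?g = "\<lambda>v. (2::nat) ^ (n + 3) - rank v"
  have "?V \<subseteq> {v. level v \<le> n + 3}" using inv unfolding ta_invariant_def by force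
  then have fin: "finite ?V" using finite_level_le finite_subset by blast
  have adm_uw: "adm_edge u w" using inv uw unfolding ta_invariant_def adm_edges_def by blast
  have "level u \<le> n + 2" using inv su unfolding ta_invariant_def by blast
  then have "(2::nat) ^ level w \<le> 2 ^ (n + 3)"
    using adm_edge_level[OF adm_uw] by (intro power_increasing) auto
  then have "rank w < 2 ^ (n + 3)" using rank_less[of w] by linarith
  then have "?g w < ?g u" using adm_edge_rank[OF adm_uw] by linarith
  moreover have "sum ?g (insert w (?V - {u})) \<le> ?g w + sum ?g (?V - {u})"
    using fin by (simp add: sum.insert_if)
  moreover have "sum ?g ?V = ?g u + sum ?g (?V - {u})"
    using fin su by (simp add: sum.remove)
  moreover have "{v. sum_eq v \<in> sum_transform S u w} = insert w (?V - {u})"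
    using sum_eq_sum_transform_iff by blast
  ultimately show ?thesis unfolding sum_weight_def by simp
qed

lemma sum_transform_decreases:
  assumes inv: "ta_invariant n S" and su: "sum_eq u \<in> S" and uw: "(u, w) \<in> lat S"
  shows "(sum_transform S u w, S) \<in> measures [missing_edges n, sum_weight n]"
proof (cases "lat (sum_transform S u w) = lat S")
  case True
  then show ?thesis
    using sum_weight_sum_transform_less[OF assms] by (simp add: missing_edges_def)
next
  case False
  have "lat (sum_transform S u w) \<subseteq> adm_edges n"
    using ta_invariant_sum_transform[OF assms] unfolding ta_invariant_def by blast
  then have "adm_edges n - lat (sum_transform S u w) \<subset> adm_edges n - lat S"
    using False lat_sum_transform[of S u w] by blast
  then have "missing_edges n (sum_transform S u w) < missing_edges n S"
    unfolding missing_edges_def by (meson finite_Diff finite_adm_edges psubset_card_mono)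
  then show ?thesis by simp
qed

lemma covered_edge_halted:
  assumes inv: "ta_invariant n S" and halt: "\<nexists>S'. ta_step S S'"
    and cv: "covered S v" and vw: "(v, w) \<in> lat S"
  shows "covered S w \<and> (ch v d, ch w d) \<in> lat S"
proof -
  have ns: "sum_eq v \<notin> S" using ta_step_exists vw halt by blast
  obtain w' where "(v, w') \<in> lat S"
    and "(ch v D1, ch w' D1) \<in> lat S" "(ch v D2, ch w' D2) \<in> lat S"
    using cv ns unfolding covered_def by blast
  moreover have "w' = w"
  proof -
    have "lat S \<subseteq> adm_edges n" using inv unfolding ta_invariant_def by blast
    then show ?thesis
      using \<open>(v, w') \<in> lat S\<close> vw adm_edge_unique unfolding adm_edges_def by blast
  qed
  moreover have "covered S w" using inv ns cv vw unfolding ta_invariant_def by blast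
  ultimately show ?thesis by (cases d) auto
qed

lemma covered_trancl_halted:
  assumes inv: "ta_invariant n S" and halt: "\<nexists>S'. ta_step S S'"
    and path: "(a, b) \<in> (lat S)\<^sup>+" and ca: "covered S a"
  shows "covered S b \<and> (ch a d, ch b d) \<in> (lat S)\<^sup>+"
  using path
proof (induction rule: trancl_induct)
  case (base b)
  then show ?case using covered_edge_halted[OF inv halt ca] by blast
next
  case (step b c)
  then show ?case using covered_edge_halted[OF inv halt _ step(2)] by (meson trancl_into_trancl)
qed

lemma lat_trancl_halted:
  assumes inv: "ta_invariant n S" and halt: "\<nexists>S'. ta_step S S'" and "j \<le> n + 1"
  shows "(Xv (ones j), Yv (twos j)) \<in> (lat S)\<^sup>+"
  using \<open>j \<le> n + 1\<close>
proof (induction j)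
  case 0
  then show ?case using inv unfolding ta_invariant_def lat_sigma by (auto simp: ones_def twos_def)
next
  case (Suc j)
  then have path: "(Xv (ones j), Yv (twos j)) \<in> (lat S)\<^sup>+" and "j \<le> n" by auto
  have cov: "covered S (Xv (ones j))" using inv \<open>j \<le> n\<close> unfolding ta_invariant_def by simp
  have "(Xv (ones j @ [D1]), Yv (twos j @ [D1])) \<in> (lat S)\<^sup>+"
    using covered_trancl_halted[OF inv halt path cov, of D1] by simp
  moreover have "(Yv (twos j @ [D1]), Xv (ones j @ [D2])) \<in> lat S"
    using inv \<open>j \<le> n\<close> unfolding ta_invariant_def lat_sigma by blast
  moreover have "(Xv (ones j @ [D2]), Yv (twos j @ [D2])) \<in> (lat S)\<^sup>+"
    using covered_trancl_halted[OF inv halt path cov, of D2] by simp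
  ultimately show ?case
    unfolding ones_Suc twos_Suc by (meson trancl_into_trancl trancl_trans)
qed

lemma ta_run_invariant:
  assumes "ta_run n f"
  shows "ta_invariant n (f i)"
proof (induction i)
  case 0
  then show ?case using assms ta_invariant_sigma unfolding ta_run_def by simp
next
  case (Suc i)
  show ?case
  proof (cases "ta_step (f i) (f (Suc i))")
    case True
    then show ?thesis by (elim ta_stepE) (simp add: Suc ta_invariant_sum_transform)
  next
    case False
    then show ?thesis using assms Suc unfolding ta_run_def by metis
  qed
qed

lemma ta_run_halts:
  assumes run: "ta_run n f"
  shows "\<exists>i. \<nexists>S'. ta_step (f i) S'"
proof (rule ccontr)
  assume "\<not> ?thesis"
  then have step: "ta_step (f i) (f (Suc i))" for i using run unfolding ta_run_def by blast
  have "(f (Suc i), f i) \<in> measures [missing_edges n, sum_weight n]" for i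
    using step[of i] sum_transform_decreases[OF ta_run_invariant[OF run]] by (elim ta_stepE) simp
  then show False using wf_no_infinite_down_chainE[OF wf_measures] by blast
qed

theorem lemma5:
  fixes n k :: nat and f :: "nat \<Rightarrow> system"
  assumes "ta_run n f" and "1 \<le> k" and "k < n + 3"
  shows "\<exists>i. (Xv (ones (k - 1)), Yv (twos (k - 1))) \<in> (lat (f i))\<^sup>+"
proof -
  obtain i where halt: "\<nexists>S'. ta_step (f i) S'" using ta_run_halts[OF assms(1)] by blast
  have "k - 1 \<le> n + 1" using assms(3) by simp
  then have "(Xv (ones (k - 1)), Yv (twos (k - 1))) \<in> (lat (f i))\<^sup>+"
    using lat_trancl_halted[OF ta_run_invariant[OF assms(1)] halt] by blast
  then show ?thesis ..
qed

end
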